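(* Let $k=k(n)$, $m=m(n)$ be positive integers and suppose there is $\xi=\xi(n)\in(0,1/2)$ with $$\exp[-\xi^2 n]=o\big((1-2^{-k})^m\big)\qquad\text{and}\qquad \Big(\frac{1+2\xi}{4}\Big)^k=o(1/m).$$ Let $f=\bigwedge_{i=1}^m C_i$ where $C_1,\dots,C_m$ are independent uniformly random $k$-clauses on $x_1,\dots,x_n$. Then for every fixed $\zeta>0$, $$\Pr\Big(\big|\mu(f)-(1-2^{-k})^m\big|>\zeta(1-2^{-k})^m\Big)\to 0\quad(n\to\infty).$$
   Context: $\mu$ is the uniform probability measure on $\{0,1\}^n$ and $\mu(f)=\mu(\{x: f(x)=1\})$. A uniformly random $k$-clause on $x_1,\dots,x_n$ is obtained by choosing a $k$-subset $K\subseteq[n]$ uniformly at random and a vector $g\in\{0,1\}^K$ uniformly at random; the clause is the Boolean function $C(x)=1$ iff $x_j=g_j$ for some $j\in K$. *)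

theory Defs
  imports "HOL-Probability.Probability" "HOL-Library.Landau_Symbols"
begin

text \<open>Assignments x in {0,1}^n, with variables indexed 0..n-1 and 1 encoded as True.\<close>
definition cube :: "nat \<Rightarrow> (nat \<Rightarrow> bool) set" where
  "cube n = {..<n} \<rightarrow>\<^sub>E (UNIV :: bool set)"

text \<open>A clause is a pair (K, g) with K a k-subset of the variables and g in {0,1}^K;
  C(x) = 1 iff x_j = g_j for some j in K.\<close>
type_synonym clause = "nat set \<times> (nat \<Rightarrow> bool)"

definition clause_val :: "clause \<Rightarrow> (nat \<Rightarrow> bool) \<Rightarrow> bool" where
  "clause_val C x = (\<exists>j\<in>fst C. x j = snd C j)"

definition random_clause :: "nat \<Rightarrow> nat \<Rightarrow> clause pmf" where
  "random_clause n k =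
     bind_pmf (pmf_of_set {K. K \<subseteq> {..<n} \<and> card K = k})
       (\<lambda>K. map_pmf (\<lambda>g. (K, g)) (pmf_of_set (K \<rightarrow>\<^sub>E (UNIV :: bool set))))"

definition random_formula :: "nat \<Rightarrow> nat \<Rightarrow> nat \<Rightarrow> (nat \<Rightarrow> clause) pmf" where
  "random_formula n k m = Pi_pmf {..<m} undefined (\<lambda>_. random_clause n k)"

definition mu :: "nat \<Rightarrow> nat \<Rightarrow> (nat \<Rightarrow> clause) \<Rightarrow> real" where
  "mu n m F = real (card {x \<in> cube n. \<forall>i<m. clause_val (F i) x}) / 2 ^ n"

end

theory Submission
  imports Defs
begin

(* Second moment method. E[mu f] = (1 - 2^-k)^m, and E[(mu f)^2] is the average over pairs
   of assignments x, y of P(C x and C y)^m. That probability depends only on the number a of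
   coordinates where x and y agree: on a support K the clause is falsified by x for the single
   sign vector (not x)|K, so it equals 1 - 2^(1-k) + (a choose k)/(n choose k) * 2^-k.
   For a < (1/2 + xi) n this is at most (1 - 2^-k)^2 + ((1 + 2 xi)/4)^k, and by Hoeffding only
   a fraction exp(-2 xi^2 n) of the pairs agree more. Hence
     Var(mu f) / E[mu f]^2 <= exp(4 m ((1 + 2 xi)/4)^k) - 1 + exp(-xi^2 n) / E[mu f],
   which tends to 0 by the two hypotheses, and Chebyshev's inequality concludes. *)

lemma measure_bind_pmf:
  "measure_pmf.prob (bind_pmf M f) A = measure_pmf.expectation M (\<lambda>x. measure_pmf.prob (f x) A)"
  unfolding measure_pmf_bind
  by (rule measure_pmf.measure_bind[where N="count_space UNIV"])
    (auto simp: space_subprob_algebra measure_pmf.subprob_space_axioms)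

lemma measure_Pi_pmf_all_in:
  assumes "finite I"
  shows "measure_pmf.prob (Pi_pmf I d (\<lambda>_. p)) {F. \<forall>i\<in>I. F i \<in> E} = measure_pmf.prob p E ^ card I"
proof -
  have "{F. \<forall>i\<in>I. F i \<in> E} = Pi I (\<lambda>_. E)" by (auto simp: Pi_def)
  then show ?thesis using assms by (simp add: measure_Pi_pmf_Pi)
qed

lemma expectation_of_bool:
  "measure_pmf.expectation M (\<lambda>x. of_bool (P x) :: real) = measure_pmf.prob M {x. P x}"
proof -
  have "(\<lambda>x. of_bool (P x) :: real) = indicator {x. P x}" by (auto simp: indicator_def)
  then show ?thesis by simp
qed

lemma integrable_of_bool_pmf: "integrable (measure_pmf M) (\<lambda>x. of_bool (P x) :: real)"
  by (intro measure_pmf.integrable_const_bound[where B=1]) auto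

lemma measure_binomial_pmf_half:
  "measure_pmf.prob (binomial_pmf n (1/2)) {a. P a} = (\<Sum>a | a \<le> n \<and> P a. real (n choose a)) / 2 ^ n"
proof -
  have "measure_pmf.prob (binomial_pmf n (1/2)) {a. P a}
      = measure_pmf.prob (binomial_pmf n (1/2)) ({a. P a} \<inter> set_pmf (binomial_pmf n (1/2)))"
    by (rule measure_Int_set_pmf[symmetric])
  also have "{a. P a} \<inter> set_pmf (binomial_pmf n (1/2)) = {a. a \<le> n \<and> P a}" by auto
  also have "measure_pmf.prob (binomial_pmf n (1/2)) {a. a \<le> n \<and> P a}
      = (\<Sum>a | a \<le> n \<and> P a. real (n choose a) * (1/2) ^ a * (1/2) ^ (n - a))"
    by (subst measure_measure_pmf_finite) auto
  also have "\<dots> = (\<Sum>a | a \<le> n \<and> P a. real (n choose a) / 2 ^ n)"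
  proof (intro sum.cong refl)
    fix a assume "a \<in> {a. a \<le> n \<and> P a}"
    then have "(1/2::real) ^ a * (1/2) ^ (n - a) = (1/2) ^ n" by (simp add: power_add[symmetric])
    then show "real (n choose a) * (1/2) ^ a * (1/2) ^ (n - a) = real (n choose a) / 2 ^ n"
      by (simp add: power_divide mult.assoc)
  qed
  finally show ?thesis by (simp add: sum_divide_distrib)
qed

lemma card_subsets_with_card_property:
  "card {B. B \<subseteq> {..<n} \<and> P (card B)} = (\<Sum>a | a \<le> n \<and> P a. n choose a)"
proof -
  have "{B. B \<subseteq> {..<n} \<and> P (card B)} = (\<Union>a\<in>{a. a \<le> n \<and> P a}. {B. B \<subseteq> {..<n} \<and> card B = a})"
    by (auto intro: card_mono[of "{..<n}", simplified])
  also have "card \<dots> = (\<Sum>a | a \<le> n \<and> P a. card {B. B \<subseteq> {..<n} \<and> card B = a})"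
    by (intro card_UN_disjoint) (auto intro: finite_subset[of _ "Pow {..<n}"])
  also have "\<dots> = (\<Sum>a | a \<le> n \<and> P a. n choose a)"
    using n_subsets[of "{..<n}"] by simp
  finally show ?thesis .
qed

lemma Suc_mult_binomial_Suc:
  assumes "k \<le> a"
  shows "real (Suc k) * real (a choose Suc k) = (real a - k) * real (a choose k)"
proof -
  have "Suc k * (a choose Suc k) = (a - k) * (a choose k)"
    by (metis binomial_absorb_comp binomial_absorption mult.commute)
  then show ?thesis using assms by (metis of_nat_diff of_nat_mult)
qed

lemma binomial_mult_power_le:
  assumes "a \<le> n"
  shows "real (a choose k) * real n ^ k \<le> real (n choose k) * real a ^ k"
proof (induction k)
  case 0 then show ?case by simp
next
  case (Suc k)
  show ?case
  proof (cases "Suc k \<le> a")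
    case False then show ?thesis by (simp add: binomial_eq_0)
  next
    case True
    have "k \<le> n" using True assms by simp
    have "real (Suc k) * (real (a choose Suc k) * real n ^ Suc k)
        = (real (Suc k) * real (a choose Suc k)) * (real n * real n ^ k)"
      by (simp only: power_Suc mult_ac)
    also have "\<dots> = (real a - k) * real n * (real (a choose k) * real n ^ k)"
      unfolding Suc_mult_binomial_Suc[OF Suc_leD[OF True]] by (simp only: mult_ac)
    also have "\<dots> \<le> (real n - k) * real a * (real (n choose k) * real a ^ k)"
    proof (rule mult_mono)
      have "real a * k \<le> real n * k" using assms by (intro mult_right_mono) auto
      then show "(real a - k) * real n \<le> (real n - k) * real a" by (simp add: algebra_simps)
      show "0 \<le> (real n - k) * real a" using \<open>k \<le> n\<close> by simp
    qed (use Suc.IH in auto)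
    also have "\<dots> = (real (Suc k) * real (n choose Suc k)) * (real a * real a ^ k)"
      unfolding Suc_mult_binomial_Suc[OF \<open>k \<le> n\<close>] by (simp only: mult_ac)
    also have "\<dots> = real (Suc k) * (real (n choose Suc k) * real a ^ Suc k)"
      by (simp only: power_Suc mult_ac)
    finally show ?thesis by (simp only: mult_le_cancel_left_pos of_nat_0_less_iff zero_less_Suc)
  qed
qed

lemma power_ratio_le_exp:
  fixes p \<epsilon> :: real
  assumes "p \<ge> 1/2" and "\<epsilon> \<ge> 0"
  shows "(p\<^sup>2 + \<epsilon>) ^ m / (p ^ m)\<^sup>2 \<le> exp (4 * (\<epsilon> * m))"
proof -
  have "p\<^sup>2 \<ge> 1/4" using power_mono[OF assms(1), of 2] by (simp add: power2_eq_square)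
  have "(p\<^sup>2 + \<epsilon>) ^ m / (p ^ m)\<^sup>2 = (1 + \<epsilon> / p\<^sup>2) ^ m"
    using assms(1) by (simp add: power_divide[symmetric] field_simps power_mult[symmetric] power_mult_distrib)
  also have "\<dots> \<le> (1 + 4 * \<epsilon>) ^ m"
  proof (rule power_mono)
    have "\<epsilon> / p\<^sup>2 \<le> \<epsilon> / (1/4)" using \<open>p\<^sup>2 \<ge> 1/4\<close> assms(2) by (intro divide_left_mono) auto
    then show "1 + \<epsilon> / p\<^sup>2 \<le> 1 + 4 * \<epsilon>" by simp
  qed (use assms(2) in simp)
  also have "\<dots> \<le> exp (4 * \<epsilon>) ^ m"
    using assms(2) by (intro power_mono) (auto simp: exp_ge_add_one_self)
  also have "\<dots> = exp (4 * (\<epsilon> * m))" by (simp add: exp_of_nat_mult[symmetric] ac_simps)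
  finally show ?thesis .
qed

definition agree :: "nat \<Rightarrow> (nat \<Rightarrow> bool) \<Rightarrow> (nat \<Rightarrow> bool) \<Rightarrow> nat set" where
  "agree n x y = {j\<in>{..<n}. x j = y j}"

lemma card_agree_le: "card (agree n x y) \<le> n"
  using card_mono[OF finite_lessThan, of "agree n x y" n] unfolding agree_def by auto

lemma agree_self: "agree n x x = {..<n}"
  unfolding agree_def by auto

lemma finite_cube: "finite (cube n)"
  unfolding cube_def by (simp add: finite_PiE)

lemma card_cube: "card (cube n) = 2 ^ n"
  unfolding cube_def by (simp add: card_PiE)

lemma card_agree_property:
  assumes "x \<in> cube n"
  shows "card {y\<in>cube n. P (card (agree n x y))} = (\<Sum>a | a \<le> n \<and> P a. n choose a)"
proof -
  define flip where "flip = (\<lambda>B j. if j < n then (if j \<in> B then x j else \<not> x j) else undefined)"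
  have agree_flip: "agree n x (flip B) = B" if "B \<subseteq> {..<n}" for B
    using that unfolding flip_def agree_def by auto
  have "bij_betw (agree n x) {y\<in>cube n. P (card (agree n x y))} {B. B \<subseteq> {..<n} \<and> P (card B)}"
  proof (rule bij_betw_byWitness[where f' = flip])
    show "\<forall>y\<in>{y\<in>cube n. P (card (agree n x y))}. flip (agree n x y) = y"
      unfolding flip_def agree_def cube_def by (auto simp: fun_eq_iff PiE_def extensional_def)
    show "agree n x ` {y\<in>cube n. P (card (agree n x y))} \<subseteq> {B. B \<subseteq> {..<n} \<and> P (card B)}"
      unfolding agree_def by auto
    have "flip B \<in> cube n" for B unfolding flip_def cube_def by auto
    then show "flip ` {B. B \<subseteq> {..<n} \<and> P (card B)} \<subseteq> {y\<in>cube n. P (card (agree n x y))}"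
      using agree_flip by auto
  qed (use agree_flip in auto)
  then show ?thesis
    unfolding card_subsets_with_card_property[of n P, symmetric] by (rule bij_betw_same_card)
qed

lemma card_large_agreement_le:
  assumes "x \<in> cube n" and "n > 0" and "\<xi> \<ge> 0"
  shows "real (card {y\<in>cube n. real (card (agree n x y)) / n \<ge> 1/2 + \<xi>}) \<le> 2 ^ n * exp (-2 * real n * \<xi>\<^sup>2)"
proof -
  interpret binomial_distribution n "1/2" by unfold_locales auto
  have "real (card {y\<in>cube n. real (card (agree n x y)) / n \<ge> 1/2 + \<xi>})
      = 2 ^ n * measure_pmf.prob (binomial_pmf n (1/2)) {a. real a / n \<ge> 1/2 + \<xi>}"
    using card_agree_property[OF assms(1), of "\<lambda>a. real a / n \<ge> 1/2 + \<xi>"]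
    by (simp add: measure_binomial_pmf_half)
  also have "\<dots> \<le> 2 ^ n * exp (-2 * real n * \<xi>\<^sup>2)"
    using prob_ge'[OF assms(2,3)] by simp
  finally show ?thesis .
qed

lemma prob_clause_sat_both_fixed_support:
  assumes "finite K" and "card K = k"
  shows "measure_pmf.prob (pmf_of_set (K \<rightarrow>\<^sub>E (UNIV :: bool set)))
           {g. clause_val (K, g) x \<and> clause_val (K, g) y}
         = (2 ^ k - (if \<forall>j\<in>K. x j = y j then 1 else 2)) / 2 ^ k"
proof -
  define G where "G = K \<rightarrow>\<^sub>E (UNIV :: bool set)"
  define gx where "gx = restrict (\<lambda>j. \<not> x j) K"
  define gy where "gy = restrict (\<lambda>j. \<not> y j) K"
  have "finite G" "G \<noteq> {}" "card G = 2 ^ k"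
    unfolding G_def using assms by (simp_all add: finite_PiE PiE_eq_empty_iff card_PiE)
  have falsifying: "\<not> clause_val (K, g) z \<longleftrightarrow> g = restrict (\<lambda>j. \<not> z j) K" if "g \<in> G" for g z
    using that unfolding G_def clause_val_def by (auto simp: fun_eq_iff PiE_def extensional_def)
  have "G \<inter> {g. clause_val (K, g) x \<and> clause_val (K, g) y} = G - {gx, gy}"
    using falsifying unfolding gx_def gy_def by blast
  moreover have "{gx, gy} \<subseteq> G" unfolding G_def gx_def gy_def by auto
  moreover have "gx = gy \<longleftrightarrow> (\<forall>j\<in>K. x j = y j)"
    unfolding gx_def gy_def by (auto simp: restrict_def fun_eq_iff)
  then have "card {gx, gy} = (if \<forall>j\<in>K. x j = y j then 1 else 2)"
    by auto
  ultimately show ?thesis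
    using \<open>finite G\<close> \<open>G \<noteq> {}\<close> \<open>card G = 2 ^ k\<close> card_mono[OF \<open>finite G\<close>, of "{gx, gy}"]
    unfolding G_def[symmetric]
    by (simp add: measure_pmf_of_set card_Diff_subset of_nat_diff)
qed

definition clause_pair_prob :: "nat \<Rightarrow> nat \<Rightarrow> nat \<Rightarrow> real" where
  "clause_pair_prob n k a = 1 - 2 / 2 ^ k + real (a choose k) / real (n choose k) / 2 ^ k"

lemma prob_random_clause_sat_both:
  assumes "k \<le> n"
  shows "measure_pmf.prob (random_clause n k) {C. clause_val C x \<and> clause_val C y}
         = clause_pair_prob n k (card (agree n x y))"
proof -
  define KS where "KS = {K. K \<subseteq> {..<n} \<and> card K = k}"
  define A where "A = agree n x y"
  have "finite KS" unfolding KS_def by (rule finite_subset[of _ "Pow {..<n}"]) auto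
  have card_KS: "card KS = n choose k" unfolding KS_def using n_subsets[of "{..<n}" k] by simp
  then have "KS \<noteq> {}" using assms by auto
  have "A \<subseteq> {..<n}" unfolding A_def agree_def by auto
  then have "{K \<in> KS. K \<subseteq> A} = {K. K \<subseteq> A \<and> card K = k}" unfolding KS_def by auto
  then have card_KS_A: "card {K \<in> KS. K \<subseteq> A} = card A choose k"
    using n_subsets[of A] \<open>A \<subseteq> {..<n}\<close> finite_subset by fastforce
  have prob_K: "measure_pmf.prob (pmf_of_set (K \<rightarrow>\<^sub>E (UNIV :: bool set)))
           {g. clause_val (K, g) x \<and> clause_val (K, g) y}
      = (1 - 2 / 2 ^ k) + of_bool (K \<subseteq> A) / 2 ^ k" if "K \<in> KS" for K
  proof -
    have agree_on_K: "(\<forall>j\<in>K. x j = y j) \<longleftrightarrow> K \<subseteq> A"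
      using that unfolding KS_def A_def agree_def by auto
    have "finite K" "card K = k" using that finite_subset unfolding KS_def by auto
    then show ?thesis using prob_clause_sat_both_fixed_support[of K k x y]
      unfolding agree_on_K by (cases "K \<subseteq> A") (simp_all add: field_simps)
  qed
  have "measure_pmf.prob (random_clause n k) {C. clause_val C x \<and> clause_val C y}
      = (\<Sum>K\<in>KS. (1 - 2 / 2 ^ k) + of_bool (K \<subseteq> A) / 2 ^ k) / card KS"
    unfolding random_clause_def KS_def[symmetric] measure_bind_pmf
    using \<open>finite KS\<close> \<open>KS \<noteq> {}\<close> prob_K by (simp add: integral_pmf_of_set vimage_def)
  also have "\<dots> = (card KS * (1 - 2 / 2 ^ k) + card {K \<in> KS. K \<subseteq> A} / 2 ^ k) / card KS"
    using \<open>finite KS\<close> by (simp add: sum.distrib sum_divide_distrib[symmetric] Int_def conj_commute)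
  finally show ?thesis
    using card_KS card_KS_A assms unfolding A_def clause_pair_prob_def by (simp add: add_divide_distrib)
qed

lemma prob_random_clause_sat:
  assumes "k \<le> n"
  shows "measure_pmf.prob (random_clause n k) {C. clause_val C x} = 1 - 1 / 2 ^ k"
  using prob_random_clause_sat_both[OF assms, of x x] assms by (simp add: clause_pair_prob_def agree_self field_simps)

lemma prob_random_formula_sat_all:
  "measure_pmf.prob (random_formula n k m) {F. \<forall>i<m. F i \<in> E} = measure_pmf.prob (random_clause n k) E ^ m"
proof -
  have "{F. \<forall>i<m. F i \<in> E} = {F. \<forall>i\<in>{..<m}. F i \<in> E}" by auto
  then show ?thesis unfolding random_formula_def by (simp add: measure_Pi_pmf_all_in)
qed

lemma mu_eq_average:
  "mu n m F = (\<Sum>x\<in>cube n. of_bool (\<forall>i<m. clause_val (F i) x)) / 2 ^ n"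
  unfolding mu_def using finite_cube by (simp add: Int_def conj_commute)

lemma mu_nonneg: "0 \<le> mu n m F"
  unfolding mu_def by simp

lemma mu_le_one: "mu n m F \<le> 1"
proof -
  have "card {x \<in> cube n. \<forall>i<m. clause_val (F i) x} \<le> card (cube n)"
    using finite_cube by (intro card_mono) auto
  then show ?thesis unfolding mu_def by (simp add: card_cube)
qed

lemma expectation_mu:
  assumes "k \<le> n"
  shows "measure_pmf.expectation (random_formula n k m) (mu n m) = (1 - 1 / 2 ^ k) ^ m"
proof -
  have "measure_pmf.expectation (random_formula n k m) (\<lambda>F. of_bool (\<forall>i<m. clause_val (F i) x))
      = (1 - 1 / 2 ^ k :: real) ^ m" for x
    using prob_random_formula_sat_all[of n k m "{C. clause_val C x}"] prob_random_clause_sat[OF assms]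
    by (simp add: expectation_of_bool)
  then show ?thesis
    unfolding mu_eq_average by (simp add: integrable_of_bool_pmf card_cube)
qed

lemma mu_squared_eq_average:
  "(mu n m F)\<^sup>2 = (\<Sum>x\<in>cube n. \<Sum>y\<in>cube n.
      of_bool (\<forall>i<m. clause_val (F i) x \<and> clause_val (F i) y)) / (2 ^ n)\<^sup>2"
proof -
  have "of_bool (\<forall>i<m. clause_val (F i) x) * of_bool (\<forall>i<m. clause_val (F i) y)
      = (of_bool (\<forall>i<m. clause_val (F i) x \<and> clause_val (F i) y) :: real)" for x y
    by auto
  then show ?thesis
    unfolding mu_eq_average power_divide power2_eq_square by (simp add: sum_product)
qed

lemma expectation_mu_squared:
  assumes "k \<le> n"
  shows "measure_pmf.expectation (random_formula n k m) (\<lambda>F. (mu n m F)\<^sup>2)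
       = (\<Sum>x\<in>cube n. \<Sum>y\<in>cube n.
            clause_pair_prob n k (card (agree n x y)) ^ m) / (2 ^ n)\<^sup>2"
proof -
  have "measure_pmf.expectation (random_formula n k m)
          (\<lambda>F. of_bool (\<forall>i<m. clause_val (F i) x \<and> clause_val (F i) y))
      = clause_pair_prob n k (card (agree n x y)) ^ m" for x y
    using prob_random_formula_sat_all[of n k m "{C. clause_val C x \<and> clause_val C y}"]
      prob_random_clause_sat_both[OF assms]
    by (simp add: expectation_of_bool)
  then show ?thesis
    unfolding mu_squared_eq_average by (simp add: integrable_of_bool_pmf integrable_sum)
qed

lemma clause_pair_prob_power_le:
  assumes "k \<ge> 1" and "k \<le> n" and "a \<le> n" and "\<xi> \<ge> 0"
  shows "clause_pair_prob n k a ^ m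
     \<le> ((1 - 1 / 2 ^ k)\<^sup>2 + ((1 + 2 * \<xi>) / 4) ^ k) ^ m
        + (1 - 1 / 2 ^ k) ^ m * of_bool (real a / n \<ge> 1/2 + \<xi>)"
proof -
  define r where "r = real (a choose k) / real (n choose k)"
  have pair_prob: "clause_pair_prob n k a = 1 - 2 / 2 ^ k + r / 2 ^ k"
    unfolding clause_pair_prob_def r_def by simp
  have "n > 0" using assms by simp
  have "r \<ge> 0" unfolding r_def by simp
  have r_le: "r \<le> (real a / n) ^ k"
    using binomial_mult_power_le[OF assms(3), of k] assms(2) \<open>n > 0\<close>
    unfolding r_def by (simp add: field_simps power_divide)
  have "real a / n \<le> 1" using assms(3) \<open>n > 0\<close> by simp
  then have "r \<le> 1" using r_le power_le_one[of "real a / n" k] by simp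
  have "(2::real) ^ k \<ge> 2" using assms(1) by (metis power_one_right power_increasing one_le_numeral)
  then have base_nonneg: "0 \<le> 1 - 2 / 2 ^ k + r / 2 ^ k" using \<open>r \<ge> 0\<close> by (simp add: field_simps)
  show ?thesis
  proof (cases "real a / n \<ge> 1/2 + \<xi>")
    case True
    have "1 - 2 / 2 ^ k + r / 2 ^ k \<le> 1 - 1 / 2 ^ k" using \<open>r \<le> 1\<close> by (simp add: field_simps)
    then have "(1 - 2 / 2 ^ k + r / 2 ^ k) ^ m \<le> (1 - 1 / 2 ^ k) ^ m"
      using base_nonneg by (intro power_mono) auto
    moreover have "0 \<le> ((1 - 1 / 2 ^ k)\<^sup>2 + ((1 + 2 * \<xi>) / 4) ^ k) ^ m"
      using assms(4) by simp
    ultimately show ?thesis using True pair_prob by simp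
  next
    case False
    then have "real a / n \<le> (1 + 2 * \<xi>) / 2" by (simp add: add_divide_distrib)
    then have "(real a / n) ^ k \<le> ((1 + 2 * \<xi>) / 2) ^ k" by (intro power_mono) auto
    then have "r / 2 ^ k \<le> ((1 + 2 * \<xi>) / 2) ^ k / 2 ^ k"
      using r_le by (simp add: divide_right_mono)
    also have "\<dots> = ((1 + 2 * \<xi>) / 4) ^ k" by (simp add: power_divide power_mult_distrib[symmetric])
    finally have "r / 2 ^ k \<le> ((1 + 2 * \<xi>) / 4) ^ k" .
    moreover have "1 - 2 / 2 ^ k \<le> (1 - 1 / (2::real) ^ k)\<^sup>2"
      by (simp add: power2_diff field_simps power2_eq_square)
    ultimately have "(1 - 2 / 2 ^ k + r / 2 ^ k) ^ m \<le> ((1 - 1 / 2 ^ k)\<^sup>2 + ((1 + 2 * \<xi>) / 4) ^ k) ^ m"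
      using base_nonneg by (intro power_mono) auto
    then show ?thesis using False pair_prob by simp
  qed
qed

lemma expectation_mu_squared_le:
  assumes "k \<ge> 1" and "k \<le> n" and "\<xi> \<ge> 0"
  shows "measure_pmf.expectation (random_formula n k m) (\<lambda>F. (mu n m F)\<^sup>2)
     \<le> ((1 - 1 / 2 ^ k)\<^sup>2 + ((1 + 2 * \<xi>) / 4) ^ k) ^ m + (1 - 1 / 2 ^ k) ^ m * exp (-2 * real n * \<xi>\<^sup>2)"
proof -
  define B where "B = ((1 - 1 / 2 ^ k)\<^sup>2 + ((1 + 2 * \<xi>) / 4) ^ k :: real) ^ m"
  define q where "q = (1 - 1 / 2 ^ k :: real) ^ m"
  define E where "E = exp (-2 * real n * \<xi>\<^sup>2)"
  have "q \<ge> 0" unfolding q_def using assms(1) by (simp add: field_simps one_le_power)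
  have row_sum: "(\<Sum>y\<in>cube n. clause_pair_prob n k (card (agree n x y)) ^ m)
      \<le> 2 ^ n * (B + q * E)" if "x \<in> cube n" for x
  proof -
    have "(\<Sum>y\<in>cube n. clause_pair_prob n k (card (agree n x y)) ^ m)
        \<le> (\<Sum>y\<in>cube n. B + q * of_bool (real (card (agree n x y)) / n \<ge> 1/2 + \<xi>))"
      unfolding B_def q_def by (intro sum_mono clause_pair_prob_power_le assms card_agree_le)
    also have "\<dots> = 2 ^ n * B + q * real (card {y\<in>cube n. real (card (agree n x y)) / n \<ge> 1/2 + \<xi>})"
      using finite_cube[of n]
      by (simp add: sum.distrib card_cube sum_distrib_left[symmetric] Int_def conj_commute)
    also have "\<dots> \<le> 2 ^ n * B + q * (2 ^ n * E)"
      unfolding E_def using card_large_agreement_le[OF that _ assms(3)] assms \<open>q \<ge> 0\<close>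
      by (intro add_left_mono mult_left_mono) auto
    finally show ?thesis by (simp add: algebra_simps)
  qed
  have "(\<Sum>x\<in>cube n. \<Sum>y\<in>cube n. clause_pair_prob n k (card (agree n x y)) ^ m)
      \<le> (\<Sum>x\<in>cube n. 2 ^ n * (B + q * E))"
    by (intro sum_mono row_sum)
  also have "\<dots> = (2 ^ n)\<^sup>2 * (B + q * E)"
    by (simp add: card_cube power2_eq_square)
  finally show ?thesis unfolding expectation_mu_squared[OF assms(2)] B_def q_def E_def
    by (simp add: divide_le_eq mult.commute)
qed

lemma prob_mu_deviation_le:
  assumes "k \<ge> 1" and "k \<le> n" and "\<xi> \<ge> 0" and "\<zeta> > 0"
  shows "measure_pmf.prob (random_formula n k m)
            {F. \<bar>mu n m F - (1 - 1 / 2 ^ k) ^ m\<bar> > \<zeta> * (1 - 1 / 2 ^ k) ^ m}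
     \<le> (exp (4 * (((1 + 2 * \<xi>) / 4) ^ k * m)) - 1 + exp (- (\<xi>\<^sup>2 * real n)) / (1 - 1 / 2 ^ k) ^ m) / \<zeta>\<^sup>2"
proof -
  define M where "M = random_formula n k m"
  define p where "p = (1 - 1 / 2 ^ k :: real)"
  define \<epsilon> where "\<epsilon> = ((1 + 2 * \<xi>) / 4) ^ k"
  have "(2::real) ^ k \<ge> 2" using assms(1) by (metis power_one_right power_increasing one_le_numeral)
  then have "p \<ge> 1/2" unfolding p_def by (simp add: field_simps)
  then have "p ^ m > 0" by simp
  have integrable_mu: "integrable (measure_pmf M) (mu n m)"
    and integrable_mu_squared: "integrable (measure_pmf M) (\<lambda>F. (mu n m F)\<^sup>2)"
    by (intro measure_pmf.integrable_const_bound[where B=1];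
        simp add: mu_nonneg mu_le_one power_le_one)+
  have expectation: "measure_pmf.expectation M (mu n m) = p ^ m"
    unfolding M_def p_def using expectation_mu[OF assms(2)] .
  moreover have "measure_pmf.expectation M (\<lambda>F. (mu n m F)\<^sup>2) \<le> (p\<^sup>2 + \<epsilon>) ^ m + p ^ m * exp (-2 * real n * \<xi>\<^sup>2)"
    unfolding M_def p_def \<epsilon>_def using expectation_mu_squared_le[OF assms(1-3)] .
  ultimately have variance: "measure_pmf.variance M (mu n m) \<le> (p\<^sup>2 + \<epsilon>) ^ m + p ^ m * exp (-2 * real n * \<xi>\<^sup>2) - (p ^ m)\<^sup>2"
    using measure_pmf.variance_eq[OF integrable_mu integrable_mu_squared] by simp
  have "measure_pmf.prob M {F. \<bar>mu n m F - p ^ m\<bar> > \<zeta> * p ^ m}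
      \<le> measure_pmf.prob M {F \<in> space (measure_pmf M). \<bar>mu n m F - measure_pmf.expectation M (mu n m)\<bar> \<ge> \<zeta> * p ^ m}"
    using expectation by (intro measure_pmf.finite_measure_mono) auto
  also have "\<dots> \<le> measure_pmf.variance M (mu n m) / (\<zeta> * p ^ m)\<^sup>2"
    using integrable_mu_squared \<open>p ^ m > 0\<close> assms(4)
    by (intro measure_pmf.Chebyshev_inequality) auto
  also have "\<dots> \<le> ((p\<^sup>2 + \<epsilon>) ^ m + p ^ m * exp (-2 * real n * \<xi>\<^sup>2) - (p ^ m)\<^sup>2) / (\<zeta> * p ^ m)\<^sup>2"
    using variance by (intro divide_right_mono) auto
  also have "\<dots> = ((p\<^sup>2 + \<epsilon>) ^ m / (p ^ m)\<^sup>2 - 1 + exp (-2 * real n * \<xi>\<^sup>2) / p ^ m) / \<zeta>\<^sup>2"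
    using \<open>p \<ge> 1/2\<close> assms(4) by (simp add: field_simps power2_eq_square)
  also have "\<dots> \<le> (exp (4 * (\<epsilon> * m)) - 1 + exp (- (\<xi>\<^sup>2 * real n)) / p ^ m) / \<zeta>\<^sup>2"
  proof -
    have "exp (-2 * real n * \<xi>\<^sup>2) / p ^ m \<le> exp (- (\<xi>\<^sup>2 * real n)) / p ^ m"
      using \<open>p ^ m > 0\<close> by (intro divide_right_mono) auto
    then show ?thesis
      using power_ratio_le_exp[OF \<open>p \<ge> 1/2\<close>, of \<epsilon> m] assms(3,4) unfolding \<epsilon>_def
      by (intro divide_right_mono) auto
  qed
  finally show ?thesis unfolding M_def p_def \<epsilon>_def .
qed

theorem lemma3p2:
  fixes k m :: "nat \<Rightarrow> nat" and \<xi> :: "nat \<Rightarrow> real" and \<zeta> :: real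
  assumes k_pos: "\<forall>n. k n > 0"
    and m_pos: "\<forall>n. m n > 0"
    and xi_range: "\<forall>n. 0 < \<xi> n \<and> \<xi> n < 1/2"
    and k_le_n: "eventually (\<lambda>n. k n \<le> n) sequentially"
    and cond1: "(\<lambda>n. exp (- ((\<xi> n)^2 * real n))) \<in> o(\<lambda>n. (1 - 1 / 2 ^ k n) ^ m n)"
    and cond2: "(\<lambda>n. ((1 + 2 * \<xi> n) / 4) ^ k n) \<in> o(\<lambda>n. 1 / real (m n))"
    and zeta_pos: "\<zeta> > 0"
  shows "(\<lambda>n. measure_pmf.prob (random_formula n (k n) (m n))
            {F. \<bar>mu n (m n) F - (1 - 1 / 2 ^ k n) ^ m n\<bar> > \<zeta> * (1 - 1 / 2 ^ k n) ^ m n})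
         \<longlonglongrightarrow> 0"
proof (rule tendsto_sandwich[OF _ _ tendsto_const])
  define U where "U = (\<lambda>n. (exp (4 * (((1 + 2 * \<xi> n) / 4) ^ k n * m n)) - 1
      + exp (- ((\<xi> n)\<^sup>2 * real n)) / (1 - 1 / 2 ^ k n) ^ m n) / \<zeta>\<^sup>2)"
  show "\<forall>\<^sub>F n in sequentially. 0 \<le> measure_pmf.prob (random_formula n (k n) (m n))
            {F. \<bar>mu n (m n) F - (1 - 1 / 2 ^ k n) ^ m n\<bar> > \<zeta> * (1 - 1 / 2 ^ k n) ^ m n}"
    by simp
  show "\<forall>\<^sub>F n in sequentially. measure_pmf.prob (random_formula n (k n) (m n))
            {F. \<bar>mu n (m n) F - (1 - 1 / 2 ^ k n) ^ m n\<bar> > \<zeta> * (1 - 1 / 2 ^ k n) ^ m n} \<le> U n"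
    using k_le_n unfolding U_def
    by eventually_elim (use prob_mu_deviation_le k_pos xi_range zeta_pos in \<open>simp add: Suc_le_eq less_imp_le\<close>)
  have "(\<lambda>n. ((1 + 2 * \<xi> n) / 4) ^ k n * m n) \<longlonglongrightarrow> 0"
    using smalloD_tendsto[OF cond2] by simp
  moreover have "(\<lambda>n. exp (- ((\<xi> n)\<^sup>2 * real n)) / (1 - 1 / 2 ^ k n) ^ m n) \<longlonglongrightarrow> 0"
    using smalloD_tendsto[OF cond1] .
  ultimately have "U \<longlonglongrightarrow> (exp (4 * 0) - 1 + 0) / \<zeta>\<^sup>2"
    unfolding U_def using zeta_pos by (intro tendsto_intros) auto
  then show "U \<longlonglongrightarrow> 0" by simp
qed

end
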